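(* Assemblage maps are in bijection with $r$-straightenings, $r$-cyclic assemblage maps are in bijection with $r$-cyclic straightenings, and $r$-cyclic assemblage maps with duality are in bijection with $r$-cyclic straightenings with duality.
   Context: Let $r$ be a positive integer and consider the standard simplex $\triangle^{r-1}$ with vertex set $\{0,1,\dots,r-1\}$. The barycentric subdivision $\operatorname{sd}\partial\triangle^{r-1}$ of its boundary is the simplicial complex with one vertex for each non-empty proper subset (face) of $\{0,\dots,r-1\}$ and one $k$-face for each ascending chain $\tau_0\subset\tau_1\subset\dots\subset\tau_k$ of such faces; this face is written $(\bar\tau_0|\bar\tau_1|\dots|\bar\tau_k)$ with $\bar\tau_i=\tau_i\smallsetminus\tau_{i-1}$. Let $s_*$ be the chain map from the normalized chains of $\partial\triangle^{r-1}$ to the normalized chains of $\operatorname{sd}\partial\triangle^{r-1}$ given on an ordered generator $[a_0,\dots,a_{k-1}]$ by $s_*([a_0,\dots,a_{k-1}])=\sum_{\pi\in\Sigma_k}(-1)^{\operatorname{sign}(\pi)}(a_{\pi(0)}|a_{\pi(1)}|\dots|a_{\pi(k-1)})$. An assemblage map is a simplicial map $g\colon\operatorname{sd}\partial\triangle^{r-1}\to\partial\triangle^{r-1}$ such that $g_*\circ s_*$ is the identity. The cyclic group $\mathbb{C}_r=\langle\rho\rangle$ acts on $\{0,\dots,r-1\}$ by $i\mapsto i+1 \bmod r$ (forward action), hence on $\partial\triangle^{r-1}$ and $\operatorname{sd}\partial\triangle^{r-1}$; an $r$-cyclic assemblage map is an assemblage map that is $\mathbb{C}_r$-equivariant. Let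 $\Lambda$ be the endomorphism of $\operatorname{sd}\partial\triangle^{r-1}$ sending an ascending chain $\tau_0\subset\dots\subset\tau_{k-1}$ to $(-1)^{\binom{k}{2}}\,\tau_{k-1}^c\subset\dots\subset\tau_0^c$ (complements in $\{0,\dots,r-1\}$). An $r$-cyclic assemblage map with duality is an $r$-cyclic assemblage map $g$ such that the composition $\rho^{-1}\circ g\circ\Lambda\colon\operatorname{sd}\partial\triangle^{r-1}\to\partial\triangle^{r-1}$ is also an assemblage map. An $r$-straightening is a choice, for each non-empty proper subset $\tau$ of $\{0,1,\dots,r-1\}$, of an element $x_\tau\in\tau$; it is $r$-cyclic if it is equivariant with respect to the action of $\mathbb{C}_r$, and it is an $r$-cyclic straightening with duality if moreover the cyclic predecessor of $x_\tau$ is not an element of $\tau$. *)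

theory Defs
  imports "HOL-Combinatorics.Permutations" "HOL-Library.FuncSet"
begin

text \<open>Vertices of the simplex are 0..r-1. Faces of the boundary of the simplex
  (= vertices of its barycentric subdivision): non-empty proper subsets.\<close>
definition bfaces :: "nat \<Rightarrow> nat set set" where
  "bfaces r = {\<tau>. \<tau> \<subseteq> {..<r} \<and> \<tau> \<noteq> {} \<and> \<tau> \<noteq> {..<r}}"

text \<open>Simplices of the barycentric subdivision: non-empty strictly ascending
  chains of faces, written as lists.\<close>
definition sd_simplex :: "nat \<Rightarrow> nat set list \<Rightarrow> bool" where
  "sd_simplex r cs \<longleftrightarrow> cs \<noteq> [] \<and> set cs \<subseteq> bfaces r \<and> sorted_wrt (\<subset>) cs"

text \<open>Simplicial maps sd(boundary) -> boundary, given by their vertex maps.\<close>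
definition simplicial_map :: "nat \<Rightarrow> (nat set \<Rightarrow> nat) \<Rightarrow> bool" where
  "simplicial_map r g \<longleftrightarrow> g \<in> bfaces r \<rightarrow>\<^sub>E {..<r} \<and>
     (\<forall>cs. sd_simplex r cs \<longrightarrow> g ` set cs \<in> bfaces r)"

definition inv_sign :: "nat list \<Rightarrow> int" where
  "inv_sign ys = (-1) ^ card {(i, j). i < j \<and> j < length ys \<and> ys ! i > ys ! j}"

text \<open>The normalized chain [y_0,...,y_{k-1}] of the boundary of the simplex, written as
  its coefficient function on the basis of (increasingly oriented) simplices:
  it is zero if a vertex repeats, and [y_pi] = sign(pi) [y] otherwise.\<close>
definition orient :: "nat list \<Rightarrow> nat set \<Rightarrow> int" where
  "orient ys \<sigma> = (if distinct ys \<and> set ys = \<sigma> then inv_sign ys else 0)"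

text \<open>The face (a_{p 0} | ... | a_{p (k-1)}) of sd as an ascending chain of faces.\<close>
definition chain_of :: "nat list \<Rightarrow> (nat \<Rightarrow> nat) \<Rightarrow> nat set list" where
  "chain_of as p = map (\<lambda>i. set (map (\<lambda>j. as ! p j) [0..<Suc i])) [0..<length as]"

text \<open>A chain map F from normalized chains of sd to normalized chains of the boundary,
  specified on generators (ascending chains) as sign times ordered simplex;
  (F o s_*) applied to the generator [a_0,...,a_{k-1}].\<close>
definition comp_s :: "(nat set list \<Rightarrow> int \<times> nat list) \<Rightarrow> nat list \<Rightarrow> nat set \<Rightarrow> int" where
  "comp_s F as \<sigma> = (\<Sum>p | p permutes {..<length as}.
      sign p * fst (F (chain_of as p)) * orient (snd (F (chain_of as p))) \<sigma>)"

definition splits :: "nat \<Rightarrow> (nat set list \<Rightarrow> int \<times> nat list) \<Rightarrow> bool" where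
  "splits r F \<longleftrightarrow> (\<forall>as. as \<noteq> [] \<and> distinct as \<and> set as \<in> bfaces r \<longrightarrow> comp_s F as = orient as)"

definition induced :: "(nat set \<Rightarrow> nat) \<Rightarrow> nat set list \<Rightarrow> int \<times> nat list" where
  "induced g cs = (1, map g cs)"

definition assemblage :: "nat \<Rightarrow> (nat set \<Rightarrow> nat) \<Rightarrow> bool" where
  "assemblage r g \<longleftrightarrow> simplicial_map r g \<and> splits r (induced g)"

definition rot :: "nat \<Rightarrow> nat \<Rightarrow> nat" where "rot r i = (i + 1) mod r"
definition rotinv :: "nat \<Rightarrow> nat \<Rightarrow> nat" where "rotinv r i = (i + r - 1) mod r"

definition cyclic_assemblage :: "nat \<Rightarrow> (nat set \<Rightarrow> nat) \<Rightarrow> bool" where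
  "cyclic_assemblage r g \<longleftrightarrow> assemblage r g \<and>
     (\<forall>\<tau>\<in>bfaces r. g (rot r ` \<tau>) = rot r (g \<tau>))"

text \<open>The composite rho^{-1} o g o Lambda: on vertices tau |-> rho^{-1}(g(tau^c));
  on chain generators the sign (-1)^(k choose 2) and the reversed complemented chain.\<close>
definition dual_vertex_map :: "nat \<Rightarrow> (nat set \<Rightarrow> nat) \<Rightarrow> nat set \<Rightarrow> nat" where
  "dual_vertex_map r g = (\<lambda>\<tau>\<in>bfaces r. rotinv r (g ({..<r} - \<tau>)))"

definition dual_chain_map :: "nat \<Rightarrow> (nat set \<Rightarrow> nat) \<Rightarrow> nat set list \<Rightarrow> int \<times> nat list" where
  "dual_chain_map r g cs = ((-1) ^ (length cs choose 2),
      map (rotinv r \<circ> g) (rev (map (\<lambda>\<tau>. {..<r} - \<tau>) cs)))"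

definition cyclic_assemblage_duality :: "nat \<Rightarrow> (nat set \<Rightarrow> nat) \<Rightarrow> bool" where
  "cyclic_assemblage_duality r g \<longleftrightarrow> cyclic_assemblage r g \<and>
     simplicial_map r (dual_vertex_map r g) \<and> splits r (dual_chain_map r g)"

definition straightening :: "nat \<Rightarrow> (nat set \<Rightarrow> nat) \<Rightarrow> bool" where
  "straightening r x \<longleftrightarrow> x \<in> (\<Pi>\<^sub>E \<tau>\<in>bfaces r. \<tau>)"

definition cyclic_straightening :: "nat \<Rightarrow> (nat set \<Rightarrow> nat) \<Rightarrow> bool" where
  "cyclic_straightening r x \<longleftrightarrow> straightening r x \<and>
     (\<forall>\<tau>\<in>bfaces r. x (rot r ` \<tau>) = rot r (x \<tau>))"

definition cyclic_straightening_duality :: "nat \<Rightarrow> (nat set \<Rightarrow> nat) \<Rightarrow> bool" where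
  "cyclic_straightening_duality r x \<longleftrightarrow> cyclic_straightening r x \<and>
     (\<forall>\<tau>\<in>bfaces r. rotinv r (x \<tau>) \<notin> \<tau>)"

end

theory Submission
  imports Defs
begin

text \<open>All three bijections are identities: a vertex map is an assemblage map exactly when
  it is a straightening. If g chooses g(tau) in tau for every face, then among the k! chains
  (a_pi(0)|...|a_pi(k-1)) of s_*[a_0,...,a_(k-1)] only the one read off by g itself
  (a_pi(k-1) = g of the whole face, and so on downwards) has a non-degenerate image, and that
  image is [a_pi], whose sign cancels sign(pi). Conversely, the coefficient of [a] in
  g_* s_* [a] is non-zero, so some image simplex spans the face tau = {a_0,...}; since tau is
  the top of its chain, g(tau) lies in tau. For duality, the sign (-1)^(k choose 2) of Lambda
  is exactly the sign of reversing a simplex, so rho^-1 o g o Lambda induces the vertex map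
  tau |-> rho^-1(g(tau^c)), which is a straightening iff rho^-1(g(sigma)) is not in sigma for
  every face sigma.\<close>

definition inversions :: "nat list \<Rightarrow> (nat \<times> nat) set" where
  "inversions ys = {(i, j). i < j \<and> j < length ys \<and> ys ! i > ys ! j}"

lemma inv_sign_inversions: "inv_sign ys = (-1) ^ card (inversions ys)"
  by (simp add: inv_sign_def inversions_def)

lemma finite_inversions: "finite (inversions ys)"
  by (rule finite_subset[of _ "{..<length ys} \<times> {..<length ys}"]) (auto simp: inversions_def)

lemma inversions_swap_adjacent_subset:
  assumes "Suc i < length ys"
  defines "t \<equiv> Transposition.transpose i (Suc i)"
  shows "map_prod t t ` (inversions ys - {(i, Suc i)}) \<subseteq> inversions (permute_list t ys) - {(i, Suc i)}"
proof
  have t: "t permutes {..<length ys}" using assms by (auto intro: permutes_swap_id)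
  fix x assume "x \<in> map_prod t t ` (inversions ys - {(i, Suc i)})"
  then obtain a b where x: "x = (t a, t b)" and ab: "a < b" "b < length ys" "ys ! a > ys ! b" "(a, b) \<noteq> (i, Suc i)"
    by (auto simp: inversions_def)
  have "t a < t b" "t b < length ys" "(t a, t b) \<noteq> (i, Suc i)"
    using ab assms by (auto simp: t_def Transposition.transpose_def)
  moreover have "permute_list t ys ! t a = ys ! a" "permute_list t ys ! t b = ys ! b"
    using permute_list_nth[OF t] \<open>t a < t b\<close> \<open>t b < length ys\<close> by (simp_all add: t_def)
  ultimately show "x \<in> inversions (permute_list t ys) - {(i, Suc i)}"
    using x ab by (auto simp: inversions_def)
qed

lemma card_inversions_swap_adjacent_le:
  assumes "Suc i < length ys"
  defines "t \<equiv> Transposition.transpose i (Suc i)"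
  shows "card (inversions ys - {(i, Suc i)}) \<le> card (inversions (permute_list t ys) - {(i, Suc i)})"
proof -
  have "inj (map_prod t t)" by (simp add: t_def prod.inj_map)
  then show ?thesis
    using inversions_swap_adjacent_subset[OF assms(1)]
    by (intro card_inj_on_le) (auto simp: t_def finite_inversions intro: inj_on_subset)
qed

lemma minus_one_power_card_toggle:
  assumes "finite A" "finite B" "card (A - {x}) = card (B - {x})" "x \<in> A \<longleftrightarrow> x \<notin> B"
  shows "(-1::int) ^ card A = - ((-1) ^ card B)"
proof (cases "x \<in> A")
  case True
  have "card A = Suc (card (A - {x}))" using card.remove[OF assms(1) True] .
  also have "card (A - {x}) = card B" using assms(3,4) True by (metis Diff_empty Diff_insert0)
  finally show ?thesis by simp
next
  case False
  then have "x \<in> B" using assms(4) by blast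
  have "card B = Suc (card (B - {x}))" using card.remove[OF assms(2) \<open>x \<in> B\<close>] .
  also have "card (B - {x}) = card A" using assms(3) False by (metis Diff_empty Diff_insert0)
  finally show ?thesis by simp
qed

text \<open>Swapping two adjacent entries toggles exactly the inversion at that position.\<close>
lemma inv_sign_swap_adjacent:
  assumes "distinct ys" "Suc i < length ys"
  defines "t \<equiv> Transposition.transpose i (Suc i)"
  shows "inv_sign (permute_list t ys) = - inv_sign ys"
proof -
  let ?zs = "permute_list t ys"
  have t: "t permutes {..<length ys}" using assms by (auto intro: permutes_swap_id)
  have "permute_list t ?zs = ys"
    using permute_list_compose[OF t, of t, symmetric] by (simp add: t_def)
  then have same: "card (inversions ?zs - {(i, Suc i)}) = card (inversions ys - {(i, Suc i)})"
    using card_inversions_swap_adjacent_le[of i ys] card_inversions_swap_adjacent_le[of i ?zs] assms(2)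
    by (simp add: t_def)
  have "?zs ! i = ys ! Suc i" "?zs ! Suc i = ys ! i"
    using permute_list_nth[OF t] assms(2) by (simp_all add: t_def)
  moreover have "ys ! i \<noteq> ys ! Suc i" using assms by (simp add: nth_eq_iff_index_eq)
  ultimately have "(i, Suc i) \<in> inversions ?zs \<longleftrightarrow> (i, Suc i) \<notin> inversions ys"
    using assms(2) by (simp add: inversions_def) linarith
  then show ?thesis
    using minus_one_power_card_toggle[OF finite_inversions finite_inversions same]
    by (simp add: inv_sign_inversions)
qed

lemma inv_sign_permute_adj_transps:
  "\<forall>x\<in>set xs. Suc x < length ys \<Longrightarrow> distinct ys \<Longrightarrow>
   inv_sign (permute_list (apply_adj_transps xs) ys) = sign (apply_adj_transps xs) * inv_sign ys"
proof (induction xs arbitrary: ys)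
  case Nil
  show ?case by (simp add: sign_id)
next
  case (Cons x xs)
  let ?t = "Transposition.transpose x (Suc x)"
  have t: "?t permutes {..<length ys}" using Cons.prems(1) by (auto intro: permutes_swap_id)
  have "apply_adj_transps xs permutes {..<length ys}"
    using Cons.prems(1) by (intro permutes_apply_adj_transps) auto
  then have perm: "permute_list (apply_adj_transps (x # xs)) ys
      = permute_list (apply_adj_transps xs) (permute_list ?t ys)"
    by (simp add: permute_list_compose)
  have sign: "sign (apply_adj_transps (x # xs)) = - sign (apply_adj_transps xs)"
    by (simp add: sign_compose permutation_swap_id permutation_apply_adj_transps sign_swap_id)
  show ?case
    unfolding perm sign using Cons.IH[of "permute_list ?t ys"] Cons.prems inv_sign_swap_adjacent[of ys x] t
    by simp
qed

lemma inv_sign_permute_transpose: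
  assumes "distinct ys" "a < length ys" "b < length ys"
  shows "inv_sign (permute_list (Transposition.transpose a b) ys) = sign (Transposition.transpose a b) * inv_sign ys"
proof -
  have less: "inv_sign (permute_list (Transposition.transpose a b) ys) = sign (Transposition.transpose a b) * inv_sign ys"
    if "a < b" "b < length ys" for a b
    using inv_sign_permute_adj_transps[of "adj_transp_seq a b" ys] assms(1) that
    by (simp add: adj_transp_seq_correct set_adj_transp_seq)
  show ?thesis
    using less[of a b] less[of b a] assms by (cases a b rule: linorder_cases) (auto simp: transpose_commute sign_id)
qed

lemma inv_sign_permute:
  assumes "p permutes {..<length ys}" "distinct ys"
  shows "inv_sign (permute_list p ys) = sign p * inv_sign ys"
proof -
  have "inv_sign (permute_list p ys) = sign p * inv_sign ys"
    if "p permutes {..<n}" "length ys = n" "distinct ys" for p n and ys :: "nat list"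
    using that(1) finite_lessThan that(2,3)
  proof (induction arbitrary: ys rule: permutes_induct)
    case id
    show ?case by (simp add: sign_id)
  next
    case (swap a b p)
    let ?t = "Transposition.transpose a b"
    have t: "?t permutes {..<length ys}" using swap by (auto intro: permutes_swap_id)
    have perm: "permute_list (?t \<circ> p) ys = permute_list p (permute_list ?t ys)"
      using swap by (simp add: permute_list_compose)
    have sign: "sign (?t \<circ> p) = sign ?t * sign p"
      using swap by (metis finite_lessThan permutation_swap_id permutes_imp_permutation sign_compose)
    show ?case
      unfolding perm sign using swap.IH[of "permute_list ?t ys"] swap t inv_sign_permute_transpose[of ys a b]
      by simp
  qed
  then show ?thesis using assms by blast
qed

definition rev_perm :: "nat \<Rightarrow> nat \<Rightarrow> nat" where
  "rev_perm n i = (if i < n then n - 1 - i else i)"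

lemma rev_perm_permutes: "rev_perm n permutes {..<n}"
  by (rule inj_imp_permutes) (auto simp: inj_on_def rev_perm_def)

lemma permute_list_rev_perm: "permute_list (rev_perm (length ys)) ys = rev ys"
  by (rule nth_equalityI) (auto simp: permute_list_def rev_perm_def rev_nth)

lemma card_less_pairs: "card {(i, j). i < j \<and> j < (n::nat)} = n choose 2"
proof (induction n)
  case 0
  show ?case by simp
next
  case (Suc n)
  have split: "{(i, j). i < j \<and> j < Suc n} = {(i, j). i < j \<and> j < n} \<union> (\<lambda>i. (i, n)) ` {..<n}"
    by auto
  have "finite {(i, j). i < j \<and> j < n}"
    by (rule finite_subset[of _ "{..<n} \<times> {..<n}"]) auto
  then have "card {(i, j). i < j \<and> j < Suc n} = card {(i, j). i < j \<and> j < n} + card ((\<lambda>i. (i, n)) ` {..<n})"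
    unfolding split by (intro card_Un_disjoint) auto
  also have "card ((\<lambda>i. (i, n)) ` {..<n}) = n"
    by (subst card_image) (auto simp: inj_on_def)
  finally show ?case using Suc by (simp add: numeral_2_eq_2)
qed

lemma sign_rev_perm: "sign (rev_perm n) = (-1) ^ (n choose 2)"
proof -
  have "inv_sign (rev [0..<n]) = sign (rev_perm n) * inv_sign [0..<n]"
    using inv_sign_permute[OF rev_perm_permutes, of "[0..<n]"] permute_list_rev_perm[of "[0..<n]"] by simp
  moreover have "inversions [0..<n] = {}" by (auto simp: inversions_def)
  moreover have "inversions (rev [0..<n]) = {(i, j). i < j \<and> j < n}" by (auto simp: inversions_def rev_nth)
  ultimately show ?thesis by (simp add: inv_sign_inversions card_less_pairs)
qed

lemma orient_rev: "orient (rev ys) \<sigma> = (-1) ^ (length ys choose 2) * orient ys \<sigma>"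
  using inv_sign_permute[OF rev_perm_permutes]
  by (simp add: orient_def permute_list_rev_perm sign_rev_perm)

lemma permutes_eq_if_permute_list_eq:
  assumes "p permutes {..<length xs}" "q permutes {..<length xs}" "distinct xs"
    and "permute_list p xs = permute_list q xs"
  shows "p = q"
proof
  fix i
  show "p i = q i"
  proof (cases "i < length xs")
    case True
    then have "xs ! p i = xs ! q i" "p i < length xs" "q i < length xs"
      using assms permute_list_nth[of _ xs i] permutes_in_image[of _ "{..<length xs}"] by (metis lessThan_iff)+
    then show ?thesis using assms(3) by (simp add: nth_eq_iff_index_eq)
  next
    case False
    then show ?thesis using assms(1,2) by (simp add: permutes_not_in)
  qed
qed

definition prefix_chain :: "'a list \<Rightarrow> 'a set list" where
  "prefix_chain ys = map (\<lambda>i. set (take (Suc i) ys)) [0..<length ys]"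

lemma prefix_chain_snoc: "prefix_chain (ys @ [y]) = prefix_chain ys @ [insert y (set ys)]"
  by (auto simp: prefix_chain_def take_append intro!: map_cong)

lemma prefix_chain_subset: "\<tau> \<in> set (prefix_chain ys) \<Longrightarrow> \<tau> \<subseteq> set ys \<and> \<tau> \<noteq> {}"
  unfolding prefix_chain_def using set_take_subset by (fastforce simp: take_Suc_conv_app_nth)

lemma set_in_prefix_chain: "ys \<noteq> [] \<Longrightarrow> set ys \<in> set (prefix_chain ys)"
  by (auto simp: prefix_chain_def intro!: image_eqI[where x = "length ys - 1"])

lemma chain_of_eq_prefix_chain:
  "p permutes {..<length as} \<Longrightarrow> chain_of as p = prefix_chain (permute_list p as)"
  by (auto simp: chain_of_def prefix_chain_def permute_list_def take_map min_def intro!: map_cong)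

text \<open>The equation map h (prefix_chain ys) = ys says that ys is read off from h: its last
  entry is h (set ys), and so on recursively.\<close>
lemma map_prefix_chain_eq_if_distinct:
  assumes "\<forall>\<tau>\<in>set (prefix_chain ys). h \<tau> \<in> \<tau>" "distinct ys" "distinct (map h (prefix_chain ys))"
  shows "map h (prefix_chain ys) = ys"
  using assms
proof (induction ys rule: rev_induct)
  case Nil
  show ?case by (simp add: prefix_chain_def)
next
  case (snoc y ys)
  then have IH: "map h (prefix_chain ys) = ys" by (simp add: prefix_chain_snoc)
  moreover have "h (insert y (set ys)) \<in> insert y (set ys)" "h (insert y (set ys)) \<notin> set ys"
    using snoc.prems IH by (simp_all add: prefix_chain_snoc)
  ultimately show ?case by (simp add: prefix_chain_snoc)
qed

lemma map_prefix_chain_eq_unique: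
  assumes "map h (prefix_chain ys) = ys" "map h (prefix_chain zs) = zs"
    and "distinct ys" "distinct zs" "set ys = set zs"
  shows "ys = zs"
  using assms
proof (induction ys arbitrary: zs rule: rev_induct)
  case Nil
  then show ?case by simp
next
  case (snoc y ys)
  then obtain zs' z where zs: "zs = zs' @ [z]" by (cases zs rule: rev_exhaust) auto
  have ys: "map h (prefix_chain ys) = ys" "h (insert y (set ys)) = y"
    using snoc.prems(1) by (simp_all add: prefix_chain_snoc)
  have zs': "map h (prefix_chain zs') = zs'" "h (insert z (set zs')) = z"
    using snoc.prems(2) by (simp_all add: zs prefix_chain_snoc)
  have "insert y (set ys) = insert z (set zs')" using snoc.prems(5) zs by simp
  then have "y = z" using ys zs' by metis
  moreover from this have "set ys = set zs'" using snoc.prems(3-5) zs by auto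
  ultimately show ?case using snoc.IH[OF ys(1) zs'(1)] snoc.prems(3,4) zs by simp
qed

lemma map_prefix_chain_eq_exists:
  assumes "finite S" "\<And>T. T \<subseteq> S \<Longrightarrow> T \<noteq> {} \<Longrightarrow> h T \<in> T"
  obtains ys where "distinct ys" "set ys = S" "map h (prefix_chain ys) = ys"
  using assms
proof (induction arbitrary: thesis rule: finite_psubset_induct)
  case (psubset S)
  show ?case
  proof (cases "S = {}")
    case True
    then show ?thesis using psubset.prems(1)[of "[]"] by (simp add: prefix_chain_def)
  next
    case False
    then have hS: "h S \<in> S" using psubset.prems(2) by blast
    then have smaller: "S - {h S} \<subset> S" by blast
    have choice: "\<And>T. T \<subseteq> S - {h S} \<Longrightarrow> T \<noteq> {} \<Longrightarrow> h T \<in> T"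
      using psubset.prems(2) by blast
    obtain ys where ys: "distinct ys" "set ys = S - {h S}" "map h (prefix_chain ys) = ys"
      by (rule psubset.IH[OF smaller _ choice])
    show ?thesis
    proof (rule psubset.prems(1))
      show "distinct (ys @ [h S])" "set (ys @ [h S]) = S" using ys hS by auto
      then show "map h (prefix_chain (ys @ [h S])) = ys @ [h S]"
        using ys by (simp add: prefix_chain_snoc)
    qed
  qed
qed

lemma comp_s_induced:
  "comp_s (induced h) as \<sigma> = (\<Sum>p | p permutes {..<length as}. sign p * orient (map h (chain_of as p)) \<sigma>)"
  by (simp add: comp_s_def induced_def)

lemma comp_s_induced_eq_orient:
  assumes h: "\<And>\<tau>. \<tau> \<subseteq> set as \<Longrightarrow> \<tau> \<noteq> {} \<Longrightarrow> h \<tau> \<in> \<tau>" and as: "distinct as"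
  shows "comp_s (induced h) as = orient as"
proof
  fix \<sigma>
  let ?term = "\<lambda>p. sign p * orient (map h (chain_of as p)) \<sigma>"
  obtain ys where ys: "distinct ys" "set ys = set as" "map h (prefix_chain ys) = ys"
    using map_prefix_chain_eq_exists[of "set as" h] h by blast
  obtain p0 where p0: "p0 permutes {..<length as}" "permute_list p0 as = ys"
    using mset_eq_permutation set_eq_iff_mset_eq_distinct ys(1,2) as by metis
  have others: "?term p = 0" if p: "p permutes {..<length as}" "p \<noteq> p0" for p
  proof (rule ccontr)
    let ?zs = "permute_list p as"
    assume "?term p \<noteq> 0"
    then have "distinct (map h (prefix_chain ?zs))"
      using chain_of_eq_prefix_chain[OF p(1)] by (auto simp: orient_def split: if_splits)
    moreover have "distinct ?zs" "set ?zs = set as" using p(1) as by auto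
    ultimately have "map h (prefix_chain ?zs) = ?zs"
      using map_prefix_chain_eq_if_distinct[of ?zs h] prefix_chain_subset[of _ ?zs] h by blast
    then have "?zs = permute_list p0 as"
      using map_prefix_chain_eq_unique[of h ?zs ys] ys p0(2) \<open>distinct ?zs\<close> \<open>set ?zs = set as\<close> by simp
    then show False using permutes_eq_if_permute_list_eq[OF p(1) p0(1) as] p(2) by blast
  qed
  have "comp_s (induced h) as \<sigma> = (\<Sum>p\<in>{p0}. ?term p)"
    unfolding comp_s_induced using p0(1) others
    by (intro sum.mono_neutral_right) (auto simp: finite_permutations)
  also have "\<dots> = sign p0 * orient ys \<sigma>"
    using chain_of_eq_prefix_chain[OF p0(1)] p0(2) ys(3) by simp
  also have "\<dots> = orient as \<sigma>"
    using inv_sign_permute[OF p0(1) as] p0(2) ys(1,2) as by (simp add: orient_def mult.assoc[symmetric])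
  finally show "comp_s (induced h) as \<sigma> = orient as \<sigma>" .
qed

lemma choice_if_splits_induced:
  assumes "splits r (induced h)" "\<tau> \<in> bfaces r"
  shows "h \<tau> \<in> \<tau>"
proof -
  have "finite \<tau>" using assms(2) by (auto simp: bfaces_def intro: finite_subset)
  define as where "as = sorted_list_of_set \<tau>"
  have as: "distinct as" "set as = \<tau>" "as \<noteq> []"
    using \<open>finite \<tau>\<close> assms(2) by (auto simp: as_def bfaces_def)
  have "orient as \<tau> \<noteq> 0" using as by (simp add: orient_def inv_sign_def)
  moreover have "comp_s (induced h) as = orient as" using assms as by (simp add: splits_def)
  ultimately obtain p where p: "p permutes {..<length as}" "sign p * orient (map h (chain_of as p)) \<tau> \<noteq> 0"
    by (metis (no_types, lifting) comp_s_induced sum.not_neutral_contains_not_neutral mem_Collect_eq)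
  then have "set (map h (prefix_chain (permute_list p as))) = \<tau>"
    using chain_of_eq_prefix_chain[OF p(1)] by (auto simp: orient_def split: if_splits)
  moreover have "permute_list p as \<noteq> []" using as(3) by (metis length_0_conv length_permute_list)
  then have "\<tau> \<in> set (prefix_chain (permute_list p as))"
    using set_in_prefix_chain[of "permute_list p as"] p(1) as by simp
  ultimately show ?thesis by auto
qed

lemma splits_induced_iff: "splits r (induced h) \<longleftrightarrow> (\<forall>\<tau>\<in>bfaces r. h \<tau> \<in> \<tau>)"
proof
  assume "\<forall>\<tau>\<in>bfaces r. h \<tau> \<in> \<tau>"
  then have "comp_s (induced h) as = orient as" if "distinct as" "set as \<in> bfaces r" for as
    using that by (intro comp_s_induced_eq_orient) (auto simp: bfaces_def)
  then show "splits r (induced h)" by (simp add: splits_def)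
qed (use choice_if_splits_induced in blast)

lemma straightening_iff: "straightening r g \<longleftrightarrow> g \<in> extensional (bfaces r) \<and> (\<forall>\<tau>\<in>bfaces r. g \<tau> \<in> \<tau>)"
  by (auto simp: straightening_def PiE_iff)

lemma subset_last_if_sorted_wrt_psubset: "sorted_wrt (\<subset>) cs \<Longrightarrow> c \<in> set cs \<Longrightarrow> c \<subseteq> last cs"
proof (induction cs)
  case (Cons x xs)
  show ?case
  proof (cases "xs = []")
    case False
    then have "x \<subset> last xs" using Cons.prems(1) by simp
    then show ?thesis using Cons False by auto
  qed (use Cons.prems in simp)
qed simp

lemma simplicial_map_if_straightening:
  assumes "straightening r g"
  shows "simplicial_map r g"
  unfolding simplicial_map_def
proof (intro conjI allI impI)
  have g: "g \<in> extensional (bfaces r)" "\<And>\<tau>. \<tau> \<in> bfaces r \<Longrightarrow> g \<tau> \<in> \<tau>"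
    using assms by (auto simp: straightening_iff)
  then show "g \<in> bfaces r \<rightarrow>\<^sub>E {..<r}" by (auto simp: PiE_iff bfaces_def)
  fix cs
  assume "sd_simplex r cs"
  then have cs: "cs \<noteq> []" "set cs \<subseteq> bfaces r" "sorted_wrt (\<subset>) cs" by (auto simp: sd_simplex_def)
  then have "g ` set cs \<subseteq> last cs" using g(2) subset_last_if_sorted_wrt_psubset by blast
  moreover have "last cs \<in> bfaces r" using cs(1,2) last_in_set by blast
  then have "last cs \<subseteq> {..<r}" "last cs \<noteq> {..<r}" by (auto simp: bfaces_def)
  ultimately show "g ` set cs \<in> bfaces r" using cs(1) unfolding bfaces_def by blast
qed

lemma assemblage_iff_straightening: "assemblage r g \<longleftrightarrow> straightening r g"
proof -
  have "assemblage r g \<longleftrightarrow> simplicial_map r g \<and> (\<forall>\<tau>\<in>bfaces r. g \<tau> \<in> \<tau>)"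
    by (simp add: assemblage_def splits_induced_iff)
  also have "\<dots> \<longleftrightarrow> straightening r g"
    using simplicial_map_if_straightening by (auto simp: straightening_iff simplicial_map_def PiE_iff)
  finally show ?thesis .
qed

lemma cyclic_assemblage_iff_cyclic_straightening: "cyclic_assemblage r g \<longleftrightarrow> cyclic_straightening r g"
  by (simp add: cyclic_assemblage_def cyclic_straightening_def assemblage_iff_straightening)

lemma comp_s_dual_chain_map:
  "comp_s (dual_chain_map r g) = comp_s (induced (\<lambda>\<tau>. rotinv r (g ({..<r} - \<tau>))))"
proof -
  let ?h = "\<lambda>\<tau>. rotinv r (g ({..<r} - \<tau>))"
  have "snd (dual_chain_map r g cs) = rev (map ?h cs)" for cs
    by (simp add: dual_chain_map_def rev_map)
  then have "fst (dual_chain_map r g cs) * orient (snd (dual_chain_map r g cs)) \<sigma> = orient (map ?h cs) \<sigma>"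
    for cs \<sigma>
    by (simp add: dual_chain_map_def orient_rev mult.assoc[symmetric])
  then show ?thesis by (simp add: fun_eq_iff comp_s_def induced_def mult.assoc)
qed

lemma dual_choice_iff:
  assumes "0 < r"
  shows "(\<forall>\<tau>\<in>bfaces r. rotinv r (g ({..<r} - \<tau>)) \<in> \<tau>) \<longleftrightarrow> (\<forall>\<tau>\<in>bfaces r. rotinv r (g \<tau>) \<notin> \<tau>)"
proof -
  have compl: "{..<r} - \<tau> \<in> bfaces r" "{..<r} - ({..<r} - \<tau>) = \<tau>" if "\<tau> \<in> bfaces r" for \<tau>
    using that by (auto simp: bfaces_def)
  have "rotinv r x \<in> {..<r}" for x using assms by (simp add: rotinv_def)
  then show ?thesis using compl by (metis Diff_iff)
qed

lemma cyclic_assemblage_duality_iff: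
  assumes "0 < r"
  shows "cyclic_assemblage_duality r g \<longleftrightarrow> cyclic_straightening_duality r g"
proof -
  let ?h = "\<lambda>\<tau>. rotinv r (g ({..<r} - \<tau>))"
  have "splits r (dual_chain_map r g) \<longleftrightarrow> splits r (induced ?h)"
    by (simp add: splits_def comp_s_dual_chain_map)
  also have "\<dots> \<longleftrightarrow> (\<forall>\<tau>\<in>bfaces r. rotinv r (g \<tau>) \<notin> \<tau>)"
    unfolding splits_induced_iff using dual_choice_iff[OF assms] .
  finally have splits: "splits r (dual_chain_map r g) \<longleftrightarrow> (\<forall>\<tau>\<in>bfaces r. rotinv r (g \<tau>) \<notin> \<tau>)" .
  have "simplicial_map r (dual_vertex_map r g)" if "\<forall>\<tau>\<in>bfaces r. ?h \<tau> \<in> \<tau>"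
    using that simplicial_map_if_straightening[of r "restrict ?h (bfaces r)"]
    by (simp add: dual_vertex_map_def straightening_iff)
  then show ?thesis
    unfolding cyclic_assemblage_duality_def cyclic_straightening_duality_def splits
      cyclic_assemblage_iff_cyclic_straightening dual_choice_iff[OF assms, symmetric]
    by blast
qed

theorem lemma6p8:
  fixes r :: nat
  assumes "0 < r"
  shows "(\<exists>f. bij_betw f {g. assemblage r g} {x. straightening r x})
       \<and> (\<exists>f. bij_betw f {g. cyclic_assemblage r g} {x. cyclic_straightening r x})
       \<and> (\<exists>f. bij_betw f {g. cyclic_assemblage_duality r g} {x. cyclic_straightening_duality r x})"
  unfolding assemblage_iff_straightening cyclic_assemblage_iff_cyclic_straightening
    cyclic_assemblage_duality_iff[OF assms]
  by (blast intro: bij_betw_id)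

end
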